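(* Let $\mathcal{H}$ be a complex Hilbert space, $H_1,H_2$ closed real linear subspaces with real orthogonal projections $E_1,E_2$, and set $X(E_1,E_2):=E_1+E_2-E_1\vee E_2$. (a) $X(E_1,E_2)$ is a real selfadjoint contraction with $\|X(E_1,E_2)\|=\|E_1E_2\|$. (b) $X(E_1,E_2)=0$ if and only if $E_1\le E_2^{\perp_{\mathbb{R}}}$. (c) If $E_1$ is standard and $E_1\le E_2'$, then $X(E_1,E_2)=0$ if and only if $E_2=0$.
   Context: Real orthogonal projections are real linear idempotents selfadjoint with respect to $\mathrm{Re}\langle\cdot,\cdot\rangle$. $E_1\vee E_2$ is the real orthogonal projection onto the closed real span of $H_1\cup H_2$. $E^{\perp_{\mathbb{R}}}=1-E$ is the projection onto the real orthogonal complement with respect to $\mathrm{Re}\langle\cdot,\cdot\rangle$. $E'=1+iEi$ is the projection onto the symplectic complement $\{\xi:\mathrm{Im}\langle\xi,h\rangle=0\ \forall h\in E\mathcal{H}\}$. $E\le F$ means $E\mathcal{H}\subset F\mathcal{H}$. $E$ (or its range $H$) is standard if $H\cap iH=\{0\}$ and $H+iH$ is dense in $\mathcal{H}$. *)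

theory Defs
  imports "HOL-Analysis.Analysis"
begin

text \<open>A complex Hilbert space is modelled as a real Hilbert space (real inner product
  = Re of the complex inner product) together with the operator J of multiplication
  by the imaginary unit i: a real-linear isometry with J (J x) = - x.\<close>

definition complex_structure :: "('a::real_inner \<Rightarrow> 'a) \<Rightarrow> bool" where
  "complex_structure J \<longleftrightarrow> linear J \<and> (\<forall>x. J (J x) = - x) \<and>
     (\<forall>x y. inner (J x) (J y) = inner x y)"

definition is_rproj :: "('a::real_inner \<Rightarrow> 'a) \<Rightarrow> 'a set \<Rightarrow> bool" where
  "is_rproj P H \<longleftrightarrow> linear P \<and> (\<forall>x. P (P x) = P x) \<and>
     (\<forall>x y. inner (P x) y = inner x (P y)) \<and> range P = H"

definition rjoin :: "('a::real_inner \<Rightarrow> 'a) \<Rightarrow> ('a \<Rightarrow> 'a) \<Rightarrow> ('a \<Rightarrow> 'a)" where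
  "rjoin E1 E2 = (THE P. is_rproj P (closure (span (range E1 \<union> range E2))))"

definition rperp :: "('a::real_vector \<Rightarrow> 'a) \<Rightarrow> ('a \<Rightarrow> 'a)" where
  "rperp E = (\<lambda>x. x - E x)"

text \<open>Symplectic complement projection E' = 1 + i E i.\<close>
definition sprime :: "('a::real_vector \<Rightarrow> 'a) \<Rightarrow> ('a \<Rightarrow> 'a) \<Rightarrow> ('a \<Rightarrow> 'a)" where
  "sprime J E = (\<lambda>x. x + J (E (J x)))"

definition rle :: "('a \<Rightarrow> 'a) \<Rightarrow> ('a \<Rightarrow> 'a) \<Rightarrow> bool" where
  "rle E F \<longleftrightarrow> range E \<subseteq> range F"

definition standard :: "('a::real_normed_vector \<Rightarrow> 'a) \<Rightarrow> 'a set \<Rightarrow> bool" where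
  "standard J H \<longleftrightarrow> H \<inter> J ` H = {0} \<and>
     closure {a + b | a b. a \<in> H \<and> b \<in> J ` H} = UNIV"

definition Xop :: "('a::real_inner \<Rightarrow> 'a) \<Rightarrow> ('a \<Rightarrow> 'a) \<Rightarrow> ('a \<Rightarrow> 'a)" where
  "Xop E1 E2 = (\<lambda>x. E1 x + E2 x - rjoin E1 E2 x)"

end

theory Submission
  imports Defs
begin

(* Write F for the join of E1 and E2. Since E1 F = E1 and E2 F = E2, the operator
   X = E1 + E2 - F satisfies X = X F, and F maps onto the closure of H1 + H2; so
   it suffices to bound X u = E1 u + E2 u - u for u = a + b with a in H1, b in H2.
   This vector is the orthogonal sum of E2 E1 u and (1 - E2) E1 b, whose norms are
   at most c |E1 u| and c |u - E1 u| whenever |E1 E2| <= c; by Pythagoras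
   |X u| <= c |u|. Hence |X| <= |E1 E2|, and E1 X E2 = E1 E2 gives equality.
   In particular X = 0 iff E1 E2 = 0, i.e. iff H1 is orthogonal to H2. If moreover
   H1 lies in the symplectic complement of H2, then H2 is also orthogonal to J H1,
   hence to the dense set H1 + J H1 when H1 is standard, so H2 = 0.
   The existence of F rests on the projection theorem, proved via minimizing
   sequences and the parallelogram law. *)

lemma subspace_closure:
  fixes S :: "'a::real_normed_vector set"
  assumes "subspace S"
  shows "subspace (closure S)"
  unfolding subspace_def
proof (intro conjI ballI allI)
  show "0 \<in> closure S"
    using assms closure_subset subspace_0 by blast
next
  fix x y assume "x \<in> closure S" "y \<in> closure S"
  then obtain f g where "\<forall>n. f n \<in> S" "f \<longlonglongrightarrow> x" "\<forall>n. g n \<in> S" "g \<longlonglongrightarrow> y"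
    unfolding closure_sequential by blast
  then show "x + y \<in> closure S"
    unfolding closure_sequential
    by (intro exI[of _ "\<lambda>n. f n + g n"]) (auto intro: tendsto_add subspace_add[OF assms])
next
  fix c x assume "x \<in> closure S"
  then obtain f where "\<forall>n. f n \<in> S" "f \<longlonglongrightarrow> x"
    unfolding closure_sequential by blast
  then show "c *\<^sub>R x \<in> closure S"
    unfolding closure_sequential
    by (intro exI[of _ "\<lambda>n. c *\<^sub>R f n"]) (auto intro: tendsto_scaleR subspace_scale[OF assms])
qed

lemma parallelogram_law:
  fixes u v :: "'a::real_inner"
  shows "norm (u + v)^2 + norm (u - v)^2 = 2 * norm u^2 + 2 * norm v^2"
  by (simp add: power2_norm_eq_inner inner_add_left inner_add_right inner_diff_left
      inner_diff_right inner_commute)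

lemma convex_minimizing_sequence_Cauchy:
  fixes S :: "'a::real_inner set"
  assumes "convex S" and s: "\<And>n. s n \<in> S" and lim: "(\<lambda>n. norm (x - s n)) \<longlonglongrightarrow> infdist x S"
  shows "Cauchy s"
proof (rule metric_CauchyI)
  define \<delta> where "\<delta> n = norm (x - s n)^2 - (infdist x S)^2" for n
  have dist_bound: "dist (s i) (s j)^2 \<le> 2 * \<delta> i + 2 * \<delta> j" for i j
  proof -
    have "(1/2) *\<^sub>R (s i + s j) \<in> S"
      using convexD[OF \<open>convex S\<close> s s, of "1/2" "1/2"] by (simp add: scaleR_add_right)
    then have "infdist x S \<le> norm (x - (1/2) *\<^sub>R (s i + s j))"
      using infdist_le dist_norm by metis
    also have "\<dots> = norm ((x - s i) + (x - s j)) / 2"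
    proof -
      have "(x - s i) + (x - s j) = 2 *\<^sub>R (x - (1/2) *\<^sub>R (s i + s j))"
        by (simp add: algebra_simps scaleR_2)
      then show ?thesis by simp
    qed
    finally have "2 * infdist x S \<le> norm ((x - s i) + (x - s j))"
      by simp
    then have "(2 * infdist x S)^2 \<le> norm ((x - s i) + (x - s j))^2"
      by (rule power_mono) (simp add: infdist_nonneg)
    moreover have "dist (s i) (s j) = norm ((x - s i) - (x - s j))"
      by (simp add: dist_norm norm_minus_commute)
    ultimately show ?thesis
      using parallelogram_law[of "x - s i" "x - s j"] unfolding \<delta>_def by (simp add: power_mult_distrib)
  qed
  have "\<delta> \<longlonglongrightarrow> (infdist x S)^2 - (infdist x S)^2"
    unfolding \<delta>_def by (intro tendsto_intros lim)
  then have "\<delta> \<longlonglongrightarrow> 0" by simp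
  fix e :: real assume "0 < e"
  then obtain N where N: "\<And>n. n \<ge> N \<Longrightarrow> \<bar>\<delta> n\<bar> < e^2 / 4"
    using LIMSEQ_D[OF \<open>\<delta> \<longlonglongrightarrow> 0\<close>, of "e^2 / 4"] by auto
  have "dist (s i) (s j) < e" if "i \<ge> N" "j \<ge> N" for i j
  proof -
    have "dist (s i) (s j)^2 < e^2"
      using dist_bound[of i j] N[OF that(1)] N[OF that(2)] by linarith
    then show ?thesis
      using \<open>0 < e\<close> by (simp add: power_less_imp_less_base)
  qed
  then show "\<exists>N. \<forall>m\<ge>N. \<forall>n\<ge>N. dist (s m) (s n) < e" by blast
qed

lemma closed_convex_nearest_point:
  fixes S :: "'a::{real_inner,complete_space} set"
  assumes "closed S" "convex S" "S \<noteq> {}"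
  obtains m where "m \<in> S" "\<And>y. y \<in> S \<Longrightarrow> norm (x - m) \<le> norm (x - y)"
proof -
  have "\<exists>y\<in>S. norm (x - y) < infdist x S + inverse (Suc n)" for n
  proof -
    have "Inf ((\<lambda>y. dist x y) ` S) < infdist x S + inverse (Suc n)"
      using \<open>S \<noteq> {}\<close> by (simp add: infdist_notempty)
    then obtain y where "y \<in> S" "dist x y < infdist x S + inverse (Suc n)"
      using cInf_lessD[of "(\<lambda>y. dist x y) ` S"] \<open>S \<noteq> {}\<close> by blast
    then show ?thesis by (auto simp: dist_norm)
  qed
  then obtain s where s: "\<And>n. s n \<in> S"
    and s_near: "\<And>n. norm (x - s n) < infdist x S + inverse (Suc n)"
    by metis
  have lower: "infdist x S \<le> norm (x - s n)" for n
    using infdist_le[OF s] by (simp add: dist_norm)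
  have upper: "(\<lambda>n. infdist x S + inverse (Suc n)) \<longlonglongrightarrow> infdist x S"
    using tendsto_add[OF tendsto_const LIMSEQ_inverse_real_of_nat] by simp
  have lim: "(\<lambda>n. norm (x - s n)) \<longlonglongrightarrow> infdist x S"
    by (rule tendsto_sandwich[OF _ _ tendsto_const upper])
      (use lower s_near in \<open>auto intro!: always_eventually less_imp_le simp del: of_nat_Suc\<close>)
  have "Cauchy s"
    using \<open>convex S\<close> s lim by (rule convex_minimizing_sequence_Cauchy)
  then obtain m where "s \<longlonglongrightarrow> m"
    using Cauchy_convergent_iff convergent_def by blast
  then have "m \<in> S"
    using \<open>closed S\<close> s closed_sequentially by blast
  have "(\<lambda>n. norm (x - s n)) \<longlonglongrightarrow> norm (x - m)"
    by (intro tendsto_intros \<open>s \<longlonglongrightarrow> m\<close>)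
  then have "norm (x - m) = infdist x S"
    using lim by (rule LIMSEQ_unique)
  then have "norm (x - m) \<le> norm (x - y)" if "y \<in> S" for y
    using infdist_le[OF that, of x] by (simp add: dist_norm)
  with \<open>m \<in> S\<close> show ?thesis
    by (rule that)
qed

lemma nearest_point_subspace_orthogonal:
  fixes M :: "'a::real_inner set"
  assumes "subspace M" "m \<in> M" and nearest: "\<And>z. z \<in> M \<Longrightarrow> norm (x - m) \<le> norm (x - z)"
    and "y \<in> M"
  shows "inner (x - m) y = 0"
proof (cases "y = 0")
  case False
  define a where "a = inner (x - m) y"
  define t where "t = a / inner y y"
  have "0 < inner y y"
    using False by simp
  have "m + t *\<^sub>R y \<in> M"
    using assms by (simp add: subspace_add subspace_scale)
  then have "norm (x - m)^2 \<le> norm (x - (m + t *\<^sub>R y))^2"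
    using nearest by (simp add: power_mono)
  also have "\<dots> = norm (x - m)^2 - 2 * t * a + t^2 * inner y y"
  proof -
    have "x - (m + t *\<^sub>R y) = (x - m) - t *\<^sub>R y"
      by simp
    then show ?thesis
      unfolding a_def power2_norm_eq_inner
      by (simp add: inner_diff_left inner_diff_right inner_commute power2_eq_square algebra_simps)
  qed
  also have "t^2 * inner y y = t * a"
    unfolding t_def using \<open>0 < inner y y\<close> by (simp add: power2_eq_square)
  finally have "a^2 / inner y y \<le> 0"
    unfolding t_def by (simp add: power2_eq_square)
  then have "a^2 \<le> 0"
    using \<open>0 < inner y y\<close> by (simp add: divide_le_0_iff)
  then show ?thesis
    unfolding a_def by simp
qed simp

lemma orthogonal_decomposition_unique:
  fixes M :: "'a::real_inner set"
  assumes "subspace M" "m \<in> M" "m' \<in> M"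
    and "\<And>y. y \<in> M \<Longrightarrow> inner (x - m) y = 0" "\<And>y. y \<in> M \<Longrightarrow> inner (x - m') y = 0"
  shows "m = m'"
proof -
  have "m' - m \<in> M"
    using assms by (simp add: subspace_diff)
  then have "inner (m' - m) (m' - m) = inner (x - m) (m' - m) - inner (x - m') (m' - m)"
    by (simp add: inner_diff_left)
  also have "\<dots> = 0"
    using assms \<open>m' - m \<in> M\<close> by simp
  finally show ?thesis
    by simp
qed

lemma selfadjoint_comp_norm_bound_swap:
  fixes A B :: "'a::real_inner \<Rightarrow> 'a"
  assumes A: "\<And>x y. inner (A x) y = inner x (A y)" and B: "\<And>x y. inner (B x) y = inner x (B y)"
    and "0 \<le> c" and AB: "\<And>x. norm (A (B x)) \<le> c * norm x"
  shows "norm (B (A x)) \<le> c * norm x"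
proof (cases "B (A x) = 0")
  case False
  have "norm (B (A x))^2 = inner x (A (B (B (A x))))"
    unfolding power2_norm_eq_inner by (simp only: A B)
  also have "\<dots> \<le> norm x * norm (A (B (B (A x))))"
    by (rule norm_cauchy_schwarz)
  also have "\<dots> \<le> norm x * (c * norm (B (A x)))"
    by (rule mult_left_mono[OF AB norm_ge_zero])
  finally have "norm (B (A x)) * norm (B (A x)) \<le> (c * norm x) * norm (B (A x))"
    by (simp add: power2_eq_square algebra_simps)
  then show ?thesis
    using False by simp
qed (use \<open>0 \<le> c\<close> in simp)

lemma
  assumes "is_rproj P H"
  shows rproj_linear: "linear P"
    and rproj_idem: "P (P x) = P x"
    and rproj_selfadjoint: "inner (P x) y = inner x (P y)"
    and rproj_range: "range P = H"
  using assms unfolding is_rproj_def by auto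

lemma rproj_in_range: "is_rproj P H \<Longrightarrow> P x \<in> H"
  using rproj_range by blast

lemma rproj_fixes: "is_rproj P H \<Longrightarrow> x \<in> H \<Longrightarrow> P x = x"
  using rproj_range rproj_idem by blast

lemma rproj_subspace: "is_rproj P H \<Longrightarrow> subspace H"
  using linear_subspace_image[OF rproj_linear subspace_UNIV] rproj_range by metis

lemma rproj_orthogonal:
  assumes "is_rproj P H"
  shows "inner (P x) (y - P y) = 0"
  using assms by (simp add: inner_diff_right rproj_selfadjoint rproj_idem)

lemma rproj_pythagoras:
  assumes "is_rproj P H"
  shows "norm (P x)^2 + norm (x - P x)^2 = norm x^2"
  using norm_add_Pythagorean[of "P x" "x - P x"] rproj_orthogonal[OF assms, of x x]
  by (simp add: orthogonal_def)

lemma rproj_norm_le: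
  assumes "is_rproj P H"
  shows "norm (P x) \<le> norm x"
proof (rule power2_le_imp_le)
  show "norm (P x)^2 \<le> norm x^2"
    using rproj_pythagoras[OF assms, of x] zero_le_power2[of "norm (x - P x)"] by linarith
qed simp

lemma rproj_bounded_linear:
  assumes "is_rproj P H"
  shows "bounded_linear P"
  using rproj_norm_le[OF assms] rproj_linear[OF assms]
  by (intro bounded_linear_intro[where K=1]) (auto simp: linear_add linear_scale)

lemma rproj_absorb:
  assumes P: "is_rproj P H" and F: "is_rproj F K" and "H \<subseteq> K"
  shows "F (P x) = P x" and "P (F x) = P x"
proof -
  show FP: "F (P x) = P x" for x
    using assms rproj_in_range rproj_fixes by blast
  have "inner (P (F x)) y = inner (P x) y" for y
    using FP[of y] by (simp add: rproj_selfadjoint[OF P] rproj_selfadjoint[OF F])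
  then show "P (F x) = P x"
    using vector_eq_rdot by blast
qed

lemma rproj_unique:
  assumes "is_rproj P H" "is_rproj Q H"
  shows "P = Q"
proof
  fix x
  show "P x = Q x"
    using rproj_absorb(2)[OF assms(1,2)] rproj_absorb(2)[OF assms(2,1)] rproj_absorb(1)[OF assms(2,1)]
    by (metis order_refl)
qed

lemma rproj_exists:
  fixes M :: "'a::{real_inner,complete_space} set"
  assumes "closed M" "subspace M"
  obtains P where "is_rproj P M"
proof -
  have "\<exists>m\<in>M. \<forall>y\<in>M. inner (x - m) y = 0" for x
  proof -
    obtain m where "m \<in> M" "\<And>y. y \<in> M \<Longrightarrow> norm (x - m) \<le> norm (x - y)"
      using closed_convex_nearest_point assms subspace_imp_convex subspace_0 by blast
    then show ?thesis
      using nearest_point_subspace_orthogonal \<open>subspace M\<close> by blast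
  qed
  then obtain P where P: "\<And>x. P x \<in> M" and P_orth: "\<And>x y. y \<in> M \<Longrightarrow> inner (x - P x) y = 0"
    by metis
  have P_eqI: "P x = m" if "m \<in> M" "\<And>y. y \<in> M \<Longrightarrow> inner (x - m) y = 0" for x m
    using orthogonal_decomposition_unique[OF \<open>subspace M\<close> P that(1) P_orth that(2)] .
  have "linear P"
  proof
    show "P (x + y) = P x + P y" for x y
    proof (rule P_eqI)
      show "P x + P y \<in> M"
        using P \<open>subspace M\<close> by (simp add: subspace_add)
      show "inner (x + y - (P x + P y)) z = 0" if "z \<in> M" for z
        using P_orth[OF that, of x] P_orth[OF that, of y]
        by (simp add: inner_diff_left inner_add_left)
    qed
    show "P (c *\<^sub>R x) = c *\<^sub>R P x" for c x
    proof (rule P_eqI)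
      show "c *\<^sub>R P x \<in> M"
        using P \<open>subspace M\<close> by (simp add: subspace_scale)
      show "inner (c *\<^sub>R x - c *\<^sub>R P x) y = 0" if "y \<in> M" for y
        using P_orth[OF that, of x] by (simp add: inner_diff_left flip: scaleR_diff_right)
    qed
  qed
  moreover have P_fixes: "P m = m" if "m \<in> M" for m
    using P_eqI[OF that] by simp
  moreover have "inner (P x) y = inner x (P y)" for x y
  proof -
    have "inner (P x) y = inner (P x) (P y)"
      using P_orth[OF P, of y x] by (simp add: inner_diff_left inner_diff_right inner_commute)
    also have "\<dots> = inner x (P y)"
      using P_orth[OF P, of x y] by (simp add: inner_diff_left)
    finally show ?thesis .
  qed
  moreover have "range P = M"
    using P P_fixes by (metis image_subsetI rangeI subsetI subset_antisym)
  ultimately show ?thesis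
    using P that unfolding is_rproj_def by blast
qed

lemma rjoin_rproj:
  fixes E1 E2 :: "'a::{real_inner,complete_space} \<Rightarrow> 'a"
  shows "is_rproj (rjoin E1 E2) (closure (span (range E1 \<union> range E2)))"
proof -
  let ?M = "closure (span (range E1 \<union> range E2))"
  obtain P where "is_rproj P ?M"
    using rproj_exists[of ?M] subspace_closure[OF subspace_span] by blast
  then have "\<exists>!P. is_rproj P ?M"
    using rproj_unique by blast
  then show ?thesis
    unfolding rjoin_def by (rule theI')
qed

lemma rjoin_absorb:
  fixes E1 E2 :: "'a::{real_inner,complete_space} \<Rightarrow> 'a"
  assumes E1: "is_rproj E1 H1" and E2: "is_rproj E2 H2"
  shows "rjoin E1 E2 (E1 x) = E1 x" "E1 (rjoin E1 E2 x) = E1 x"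
    and "rjoin E1 E2 (E2 x) = E2 x" "E2 (rjoin E1 E2 x) = E2 x"
proof -
  have "range E1 \<union> range E2 \<subseteq> closure (span (range E1 \<union> range E2))"
    by (rule order_trans[OF span_superset closure_subset])
  then have "H1 \<subseteq> closure (span (range E1 \<union> range E2))" "H2 \<subseteq> closure (span (range E1 \<union> range E2))"
    unfolding rproj_range[OF E1] rproj_range[OF E2] by auto
  then show "rjoin E1 E2 (E1 x) = E1 x" "E1 (rjoin E1 E2 x) = E1 x"
    and "rjoin E1 E2 (E2 x) = E2 x" "E2 (rjoin E1 E2 x) = E2 x"
    using rproj_absorb[OF E1 rjoin_rproj] rproj_absorb[OF E2 rjoin_rproj] by blast+
qed

lemma Xop_linear:
  fixes E1 E2 :: "'a::{real_inner,complete_space} \<Rightarrow> 'a"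
  assumes E1: "is_rproj E1 H1" and E2: "is_rproj E2 H2"
  shows "linear (Xop E1 E2)"
  using rproj_linear[OF E1] rproj_linear[OF E2] rproj_linear[OF rjoin_rproj, of E1 E2]
  unfolding Xop_def by (intro linearI) (simp_all add: linear_add linear_scale algebra_simps)

lemma Xop_selfadjoint:
  fixes E1 E2 :: "'a::{real_inner,complete_space} \<Rightarrow> 'a"
  assumes E1: "is_rproj E1 H1" and E2: "is_rproj E2 H2"
  shows "inner (Xop E1 E2 x) y = inner x (Xop E1 E2 y)"
  unfolding Xop_def
  by (simp add: inner_add_left inner_diff_left inner_add_right inner_diff_right
      rproj_selfadjoint[OF E1] rproj_selfadjoint[OF E2] rproj_selfadjoint[OF rjoin_rproj])

lemma Xop_compress:
  fixes E1 E2 :: "'a::{real_inner,complete_space} \<Rightarrow> 'a"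
  assumes E1: "is_rproj E1 H1" and E2: "is_rproj E2 H2"
  shows "E1 (Xop E1 E2 (E2 x)) = E1 (E2 x)"
  unfolding Xop_def
  by (simp add: linear_add[OF rproj_linear[OF E1]] linear_diff[OF rproj_linear[OF E1]]
      rjoin_absorb[OF E1 E2] rproj_idem[OF E1] rproj_idem[OF E2])

lemma rproj_comp_perp_bound:
  assumes P: "is_rproj P H1" and Q: "is_rproj Q H2" and "0 \<le> c"
    and "b \<in> H2" and Pb: "norm (P b) \<le> c * norm b"
  shows "norm (P b - Q (P b)) \<le> c * norm (b - P b)"
proof (rule power2_le_imp_le)
  define B p q where "B = norm b^2" and "p = norm (P b)^2" and "q = norm (Q (P b))^2"
  have "p = inner b (P b)"
    unfolding p_def power2_norm_eq_inner by (simp add: rproj_selfadjoint[OF P] rproj_idem[OF P])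
  also have "\<dots> = inner b (Q (P b))"
    using rproj_selfadjoint[OF Q, of b "P b"] rproj_fixes[OF Q \<open>b \<in> H2\<close>] by simp
  also have "\<dots> \<le> norm b * norm (Q (P b))"
    by (rule norm_cauchy_schwarz)
  finally have "p^2 \<le> (norm b * norm (Q (P b)))^2"
    by (rule power_mono) (simp add: p_def)
  then have pq: "p^2 \<le> B * q"
    by (simp add: B_def q_def power_mult_distrib)
  have pc: "p \<le> c^2 * B"
    using power_mono[OF Pb norm_ge_zero, of 2] by (simp add: p_def B_def power_mult_distrib)
  have p0: "0 \<le> p" and pB: "p \<le> B" and q0: "0 \<le> q"
    using rproj_norm_le[OF P, of b] by (simp_all add: p_def B_def q_def power_mono)
  have "p - q \<le> c^2 * (B - p)"
  proof (cases "B = 0")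
    case False
    have "(p - q) * B \<le> p * (B - p)"
      using pq by (simp add: algebra_simps power2_eq_square)
    also have "\<dots> \<le> c^2 * B * (B - p)"
      using pc pB by (intro mult_right_mono) auto
    finally have "(p - q) * B \<le> (c^2 * (B - p)) * B"
      by (simp add: algebra_simps)
    moreover have "0 < B"
      using False p0 pB by simp
    ultimately show ?thesis
      by simp
  qed (use p0 pB q0 in simp)
  moreover have "norm (P b - Q (P b))^2 = p - q" "norm (b - P b)^2 = B - p"
    using rproj_pythagoras[OF Q, of "P b"] rproj_pythagoras[OF P, of b]
    by (simp_all add: p_def q_def B_def)
  ultimately show "norm (P b - Q (P b))^2 \<le> (c * norm (b - P b))^2"
    by (simp add: power_mult_distrib)
  show "0 \<le> c * norm (b - P b)"
    using \<open>0 \<le> c\<close> by simp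
qed

lemma rproj_add_defect_bound:
  assumes P: "is_rproj P H1" and Q: "is_rproj Q H2" and "0 \<le> c"
    and PQ: "\<And>x. norm (P (Q x)) \<le> c * norm x" and "a \<in> H1" "b \<in> H2"
  shows "norm (P (a + b) + Q (a + b) - (a + b)) \<le> c * norm (a + b)"
proof (rule power2_le_imp_le)
  define u where "u = a + b"
  have "u - P u = b - P b"
    unfolding u_def using rproj_fixes[OF P \<open>a \<in> H1\<close>] by (simp add: linear_add[OF rproj_linear[OF P]])
  have "Q u = Q (P u) + Q (u - P u)"
    by (simp add: linear_diff[OF rproj_linear[OF Q]])
  also have "Q (u - P u) = b - Q (P b)"
    unfolding \<open>u - P u = b - P b\<close>
    using rproj_fixes[OF Q \<open>b \<in> H2\<close>] by (simp add: linear_diff[OF rproj_linear[OF Q]])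
  finally have "P u + Q u - u = Q (P u) + (b - (u - P u) - Q (P b))"
    by (simp add: algebra_simps)
  then have "P u + Q u - u = Q (P u) + (P b - Q (P b))"
    unfolding \<open>u - P u = b - P b\<close> by simp
  then have "norm (P u + Q u - u)^2 = norm (Q (P u))^2 + norm (P b - Q (P b))^2"
    using rproj_orthogonal[OF Q] by (simp add: norm_add_Pythagorean orthogonal_def)
  also have "\<dots> \<le> (c * norm (P u))^2 + (c * norm (u - P u))^2"
  proof (intro add_mono power_mono)
    show "norm (Q (P u)) \<le> c * norm (P u)"
      using selfadjoint_comp_norm_bound_swap[OF rproj_selfadjoint[OF P] rproj_selfadjoint[OF Q]
          \<open>0 \<le> c\<close> PQ, of "P u"]
      by (simp add: rproj_idem[OF P])
    show "norm (P b - Q (P b)) \<le> c * norm (u - P u)"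
      using rproj_comp_perp_bound[OF P Q \<open>0 \<le> c\<close> \<open>b \<in> H2\<close>] PQ[of b]
      by (simp add: rproj_fixes[OF Q \<open>b \<in> H2\<close>] \<open>u - P u = b - P b\<close>)
  qed simp_all
  also have "\<dots> = (c * norm u)^2"
    using rproj_pythagoras[OF P, of u] by (simp add: power_mult_distrib flip: distrib_left)
  finally show "norm (P (a + b) + Q (a + b) - (a + b))^2 \<le> (c * norm (a + b))^2"
    unfolding u_def .
  show "0 \<le> c * norm (a + b)"
    using \<open>0 \<le> c\<close> by simp
qed

lemma Xop_norm_bound:
  fixes E1 E2 :: "'a::{real_inner,complete_space} \<Rightarrow> 'a"
  assumes E1: "is_rproj E1 H1" and E2: "is_rproj E2 H2" and "0 \<le> c"
    and E12: "\<And>x. norm (E1 (E2 x)) \<le> c * norm x"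
  shows "norm (Xop E1 E2 x) \<le> c * norm x"
proof -
  define T where "T = {u. norm (E1 u + E2 u - u) \<le> c * norm u}"
  have "closed T"
    unfolding T_def
    using linear_continuous_on[OF rproj_bounded_linear[OF E1]]
      linear_continuous_on[OF rproj_bounded_linear[OF E2]]
    by (intro closed_Collect_le continuous_intros) auto
  have "span (H1 \<union> H2) = {a + b | a b. a \<in> H1 \<and> b \<in> H2}"
    using rproj_subspace[OF E1] rproj_subspace[OF E2] by (simp add: span_Un span_eq_iff[THEN iffD2])
  also have "\<dots> \<subseteq> T"
    unfolding T_def using rproj_add_defect_bound[OF E1 E2 \<open>0 \<le> c\<close> E12] by blast
  finally have "closure (span (H1 \<union> H2)) \<subseteq> T"
    using \<open>closed T\<close> by (rule closure_minimal)
  moreover have "rjoin E1 E2 x \<in> closure (span (H1 \<union> H2))"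
    using rproj_in_range[OF rjoin_rproj, of E1 E2 x]
    unfolding rproj_range[OF E1] rproj_range[OF E2] .
  ultimately have "norm (Xop E1 E2 x) \<le> c * norm (rjoin E1 E2 x)"
    unfolding T_def Xop_def by (auto simp: rjoin_absorb[OF E1 E2])
  also have "\<dots> \<le> c * norm x"
    using \<open>0 \<le> c\<close> by (intro mult_left_mono rproj_norm_le[OF rjoin_rproj])
  finally show ?thesis .
qed

lemma rproj_comp_bounded_linear:
  assumes E1: "is_rproj E1 H1" and E2: "is_rproj E2 H2"
  shows "bounded_linear (E1 \<circ> E2)"
  unfolding comp_def
  by (rule bounded_linear_compose[OF rproj_bounded_linear[OF E1] rproj_bounded_linear[OF E2]])

lemma Xop_contraction:
  fixes E1 E2 :: "'a::{real_inner,complete_space} \<Rightarrow> 'a"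
  assumes E1: "is_rproj E1 H1" and E2: "is_rproj E2 H2"
  shows "norm (Xop E1 E2 x) \<le> norm x"
  using Xop_norm_bound[OF E1 E2, of 1] rproj_norm_le[OF E1] rproj_norm_le[OF E2]
  by (metis mult_1 order_trans zero_le_one)

lemma Xop_bounded_linear:
  fixes E1 E2 :: "'a::{real_inner,complete_space} \<Rightarrow> 'a"
  assumes E1: "is_rproj E1 H1" and E2: "is_rproj E2 H2"
  shows "bounded_linear (Xop E1 E2)"
  using Xop_linear[OF E1 E2] Xop_contraction[OF E1 E2]
  by (intro bounded_linear_intro[where K=1]) (auto simp: linear_add linear_scale)

lemma onorm_Xop:
  fixes E1 E2 :: "'a::{real_inner,complete_space} \<Rightarrow> 'a"
  assumes E1: "is_rproj E1 H1" and E2: "is_rproj E2 H2"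
  shows "onorm (Xop E1 E2) = onorm (E1 \<circ> E2)"
proof (rule antisym)
  have E12: "bounded_linear (E1 \<circ> E2)"
    by (rule rproj_comp_bounded_linear[OF E1 E2])
  show "onorm (Xop E1 E2) \<le> onorm (E1 \<circ> E2)"
  proof (rule onorm_bound[OF onorm_pos_le[OF E12]])
    show "norm (Xop E1 E2 x) \<le> onorm (E1 \<circ> E2) * norm x" for x
      by (rule Xop_norm_bound[OF E1 E2 onorm_pos_le[OF E12]]) (use onorm[OF E12] in simp)
  qed
  have X: "bounded_linear (Xop E1 E2)"
    by (rule Xop_bounded_linear[OF E1 E2])
  show "onorm (E1 \<circ> E2) \<le> onorm (Xop E1 E2)"
  proof (rule onorm_bound[OF onorm_pos_le[OF X]])
    fix x
    have "norm (E1 (E2 x)) = norm (E1 (Xop E1 E2 (E2 x)))"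
      by (simp add: Xop_compress[OF E1 E2])
    also have "\<dots> \<le> norm (Xop E1 E2 (E2 x))"
      by (rule rproj_norm_le[OF E1])
    also have "\<dots> \<le> onorm (Xop E1 E2) * norm (E2 x)"
      by (rule onorm[OF X])
    also have "\<dots> \<le> onorm (Xop E1 E2) * norm x"
      by (intro mult_left_mono rproj_norm_le[OF E2] onorm_pos_le[OF X])
    finally show "norm ((E1 \<circ> E2) x) \<le> onorm (Xop E1 E2) * norm x"
      by simp
  qed
qed

lemma Xop_eq_0_iff:
  fixes E1 E2 :: "'a::{real_inner,complete_space} \<Rightarrow> 'a"
  assumes E1: "is_rproj E1 H1" and E2: "is_rproj E2 H2"
  shows "Xop E1 E2 = (\<lambda>x. 0) \<longleftrightarrow> E1 \<circ> E2 = (\<lambda>x. 0)"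
  using onorm_eq_0[OF Xop_bounded_linear[OF E1 E2]] onorm_eq_0[OF rproj_comp_bounded_linear[OF E1 E2]]
    onorm_Xop[OF E1 E2]
  by (simp add: fun_eq_iff)

lemma range_rperp:
  assumes "is_rproj E H"
  shows "range (rperp E) = {y. E y = 0}"
proof (intro equalityI subsetI)
  fix y
  assume "y \<in> range (rperp E)"
  then show "y \<in> {y. E y = 0}"
    using rproj_idem[OF assms] by (auto simp: rperp_def linear_diff[OF rproj_linear[OF assms]])
next
  fix y
  assume "y \<in> {y. E y = 0}"
  then have "y = rperp E y"
    by (simp add: rperp_def)
  then show "y \<in> range (rperp E)"
    by (metis rangeI)
qed

lemma rle_rperp_iff:
  assumes E1: "is_rproj E1 H1" and E2: "is_rproj E2 H2"
  shows "rle E1 (rperp E2) \<longleftrightarrow> E1 \<circ> E2 = (\<lambda>x. 0)"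
proof -
  have "rle E1 (rperp E2) \<longleftrightarrow> (\<forall>x. norm (E2 (E1 x)) \<le> 0 * norm x)"
    unfolding rle_def range_rperp[OF E2] by auto
  also have "\<dots> \<longleftrightarrow> (\<forall>x. norm (E1 (E2 x)) \<le> 0 * norm x)"
    using selfadjoint_comp_norm_bound_swap[OF rproj_selfadjoint[OF E1] rproj_selfadjoint[OF E2]]
      selfadjoint_comp_norm_bound_swap[OF rproj_selfadjoint[OF E2] rproj_selfadjoint[OF E1]]
    by blast
  finally show ?thesis
    by (simp add: fun_eq_iff)
qed

lemma rproj_orthogonal_J_sprime:
  assumes J: "complex_structure J" and E: "is_rproj E H" and "h \<in> H"
  shows "inner h (J (sprime J E x)) = 0"
proof -
  have "J (sprime J E x) = J x - E (J x)"
    using J unfolding complex_structure_def sprime_def by (simp add: linear_add)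
  then show ?thesis
    using rproj_selfadjoint[OF E, of h "J x"] rproj_fixes[OF E \<open>h \<in> H\<close>]
    by (simp add: inner_diff_right)
qed

lemma standard_orthogonal_eq_0:
  assumes "standard J H"
    and "\<And>a. a \<in> H \<Longrightarrow> inner h a = 0" "\<And>a. a \<in> H \<Longrightarrow> inner h (J a) = 0"
  shows "h = 0"
proof -
  have "{a + b | a b. a \<in> H \<and> b \<in> J ` H} \<subseteq> {w. inner h w = 0}"
    using assms(2,3) by (auto simp: inner_add_right)
  then have "closure {a + b | a b. a \<in> H \<and> b \<in> J ` H} \<subseteq> {w. inner h w = 0}"
    by (rule closure_minimal) (intro closed_Collect_eq continuous_intros)
  then have "inner h h = 0"
    using \<open>standard J H\<close> unfolding standard_def by blast
  then show ?thesis
    by simp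
qed

lemma Xop_eq_0_iff_standard:
  fixes E1 E2 :: "'a::{real_inner,complete_space} \<Rightarrow> 'a"
  assumes J: "complex_structure J" and E1: "is_rproj E1 H1" and E2: "is_rproj E2 H2"
    and "standard J H1" and E1_le: "rle E1 (sprime J E2)"
  shows "Xop E1 E2 = (\<lambda>x. 0) \<longleftrightarrow> E2 = (\<lambda>x. 0)"
proof
  assume "Xop E1 E2 = (\<lambda>x. 0)"
  then have E12: "E1 (E2 x) = 0" for x
    using Xop_eq_0_iff[OF E1 E2] by (metis comp_apply)
  show "E2 = (\<lambda>x. 0)"
  proof
    fix x
    have "inner (E2 x) a = 0" if "a \<in> H1" for a
      using rproj_selfadjoint[OF E1, of "E2 x" a] rproj_fixes[OF E1 that] E12 by simp
    moreover have "inner (E2 x) (J a) = 0" if "a \<in> H1" for a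
    proof -
      obtain y where "a = sprime J E2 y"
        using E1_le \<open>a \<in> H1\<close> rproj_range[OF E1] unfolding rle_def by blast
      then show ?thesis
        using rproj_orthogonal_J_sprime[OF J E2 rproj_in_range[OF E2]] by simp
    qed
    ultimately show "E2 x = 0"
      using standard_orthogonal_eq_0[OF \<open>standard J H1\<close>] by blast
  qed
next
  assume "E2 = (\<lambda>x. 0)"
  then show "Xop E1 E2 = (\<lambda>x. 0)"
    using Xop_eq_0_iff[OF E1 E2] linear_0[OF rproj_linear[OF E1]] by (simp add: comp_def)
qed

theorem proposition5p4:
  fixes J :: "'a::{real_inner, complete_space} \<Rightarrow> 'a"
    and H1 H2 :: "'a set" and E1 E2 :: "'a \<Rightarrow> 'a"
  assumes J: "complex_structure J"
    and H1: "closed H1" "subspace H1" and H2: "closed H2" "subspace H2"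
    and E1: "is_rproj E1 H1" and E2: "is_rproj E2 H2"
  shows "(linear (Xop E1 E2) \<and>
          (\<forall>x y. inner (Xop E1 E2 x) y = inner x (Xop E1 E2 y)) \<and>
          (\<forall>x. norm (Xop E1 E2 x) \<le> norm x) \<and>
          onorm (Xop E1 E2) = onorm (E1 \<circ> E2))
       \<and> (Xop E1 E2 = (\<lambda>x. 0) \<longleftrightarrow> rle E1 (rperp E2))
       \<and> (standard J H1 \<and> rle E1 (sprime J E2) \<longrightarrow>
            (Xop E1 E2 = (\<lambda>x. 0) \<longleftrightarrow> E2 = (\<lambda>x. 0)))"
  using Xop_linear[OF E1 E2] Xop_selfadjoint[OF E1 E2] Xop_contraction[OF E1 E2] onorm_Xop[OF E1 E2]
    Xop_eq_0_iff[OF E1 E2] rle_rperp_iff[OF E1 E2] Xop_eq_0_iff_standard[OF J E1 E2]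
  by simp

end
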